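(* Let $\mathcal C$ be a Markov category with conditionals and precise supports, in which there exist a state $\mu$ and a deterministic state $o$ with $o\not\ll\mu$. Then the states $I\leadsto X$ of $\mathrm{Cond}(\mathcal C)$ are as follows: (1) all $(K,\psi,o)$ with $o\not\ll\psi_K$ are equal in $\mathrm{Cond}(\mathcal C)$, defining a unique failure state $\bot_X$; (2) if $o\ll\psi_K$, then $(K,\psi,o)=J(\psi|_K\,o)$ in $\mathrm{Cond}(\mathcal C)$, where $\psi|_K:K\to X$ is any conditional of $\psi$ with respect to $K$; (3) failure is strict: any composite with, or tensor with, a failure state is a failure state; (4) the only morphisms $I\leadsto I$ in $\mathrm{Cond}(\mathcal C)$ are $\mathrm{Id}_I$ and $\bot_I$; both are copyable, but $\bot_I$ is not discardable.
   Context: A Markov category is a symmetric monoidal category $(\mathcal C,\otimes,I)$ (assumed strict) in which every object $X$ carries a commutative comonoid $\mathrm{copy}_X$, $\mathrm{del}_X$ compatible with $\otimes$, and $I$ is terminal. A morphism $f$ is deterministic if $\mathrm{copy}_Y f=(f\otimes f)\mathrm{copy}_X$ (in a CD category, copyable means this equation and discardable means $\mathrm{del}_Y f=\mathrm{del}_X$). $\langle f,g\rangle=(f\otimes g)\mathrm{copy}_A$; marginals $f_X=(\mathrm{id}_X\otimes\mathrm{del}_Y)f$, $f_Y=(\mathrm{del}_X\otimes\mathrm{id}_Y)f$. A conditional of $f:A\to X\otimes Y$ w.r.t. $X$ is $f|_X:X\otimes A\to Y$ with $f=(\mathrm{id}_X\otimes f|_X)(\mathrm{copy}_X\otimes\mathrm{id}_A)(f_X\otimes\mathrm{id}_A)\mathrm{copy}_A$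 (symmetrically w.r.t. $Y$); $\mathcal C$ has conditionals if these always exist. $f=_\mu g$ means $\langle\mathrm{id},f\rangle\mu=\langle\mathrm{id},g\rangle\mu$; $\mu\ll\nu$ means $f=_\nu g\Rightarrow f=_\mu g$ for all $f,g$. Precise supports: for deterministic $x:I\to X$, $y:I\to Y$, any $f:X\to Y$, $\mu:I\to X$: $x\otimes y\ll\langle\mathrm{id}_X,f\rangle\mu$ iff ($x\ll\mu$ and $y\ll fx$). $\mathrm{Obs}(\mathcal C)$: same objects as $\mathcal C$; morphisms $X\leadsto Y$ are triples $(K,f,o)$, $f:X\to Y\otimes K$, $o:I\to K$ deterministic; identity $\mathrm{Id}_X=(I,\mathrm{id}_X,\mathrm{id}_I)$; composition $(K',f',o')\bullet(K,f,o)=(K'\otimes K,(f'\otimes\mathrm{id}_K)f,o'\otimes o)$; tensor of $(K,f,o):X\leadsto Y$, $(K',f',o'):X'\leadsto Y'$ is $(K'\otimes K,(\mathrm{id}_{Y'}\otimes\mathrm{swap}_{K',Y}\otimes\mathrm{id}_K)(f'\otimes f),o'\otimes o)$; $J(f)=(I,f,\mathrm{id}_I)$; copy and delete of $\mathrm{Obs}(\mathcal C)$ are $J(\mathrm{copy}_X)$, $J(\mathrm{del}_X)$. For states $(K,\psi,o),(K',\psi',o'):I\leadsto X$, $(K,\psi,o)\sim(K',\psi',o')$ iff either ($o\ll\psi_K$, $o'\ll\psi'_{K'}$ and $\psi|_Ko=\psi'|_{K'}o'$) or ($o\not\ll\psi_K$ and $o'\not\ll\psi'_{K'}$). For $F,G:X\leadsto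 Y$, $F\approx G$ iff for every $A$ and every state $\Psi:I\leadsto A\otimes X$, $(\mathrm{Id}_A\otimes F)\bullet\Psi\sim(\mathrm{Id}_A\otimes G)\bullet\Psi$. $\mathrm{Cond}(\mathcal C)=\mathrm{Obs}(\mathcal C)/{\approx}$, a CD category. *)

theory Defs
  imports Main
begin

text \<open>A category is presented by a type of objects 'o (every element is an object),
a type of morphisms 'm, a predicate c_arr of arrows with domain/codomain, composition
c_cmp g f (= g after f), identities, a strict monoidal product on objects and arrows,
the monoidal unit, symmetries c_swp X Y : X (x) Y -> Y (x) X, and the comonoid
structure c_cpy X : X -> X (x) X, c_dl X : X -> I.\<close>

record ('o, 'm) mcat =
  c_arr :: "'m \<Rightarrow> bool"
  c_dom :: "'m \<Rightarrow> 'o"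
  c_cod :: "'m \<Rightarrow> 'o"
  c_cmp :: "'m \<Rightarrow> 'm \<Rightarrow> 'm"
  c_idm :: "'o \<Rightarrow> 'm"
  c_otens :: "'o \<Rightarrow> 'o \<Rightarrow> 'o"
  c_mtens :: "'m \<Rightarrow> 'm \<Rightarrow> 'm"
  c_unit :: "'o"
  c_swp :: "'o \<Rightarrow> 'o \<Rightarrow> 'm"
  c_cpy :: "'o \<Rightarrow> 'm"
  c_dl :: "'o \<Rightarrow> 'm"

definition hom :: "('o, 'm) mcat \<Rightarrow> 'o \<Rightarrow> 'o \<Rightarrow> 'm \<Rightarrow> bool" where
  "hom C X Y f \<longleftrightarrow> c_arr C f \<and> c_dom C f = X \<and> c_cod C f = Y"

locale markov_category =
  fixes C :: "('o, 'm) mcat"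
  assumes id_hom: "hom C X X (c_idm C X)"
    and comp_hom: "hom C X Y f \<Longrightarrow> hom C Y Z g \<Longrightarrow> hom C X Z (c_cmp C g f)"
    and comp_id_right: "hom C X Y f \<Longrightarrow> c_cmp C f (c_idm C X) = f"
    and comp_id_left: "hom C X Y f \<Longrightarrow> c_cmp C (c_idm C Y) f = f"
    and comp_assoc: "hom C X Y f \<Longrightarrow> hom C Y Z g \<Longrightarrow> hom C Z W h \<Longrightarrow>
                     c_cmp C h (c_cmp C g f) = c_cmp C (c_cmp C h g) f"
    and otens_assoc: "c_otens C (c_otens C X Y) Z = c_otens C X (c_otens C Y Z)"
    and otens_unit_left: "c_otens C (c_unit C) X = X"
    and otens_unit_right: "c_otens C X (c_unit C) = X"
    and tens_hom: "hom C X Y f \<Longrightarrow> hom C X' Y' g \<Longrightarrow>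
                   hom C (c_otens C X X') (c_otens C Y Y') (c_mtens C f g)"
    and tens_id: "c_mtens C (c_idm C X) (c_idm C Y) = c_idm C (c_otens C X Y)"
    and interchange: "hom C X Y f \<Longrightarrow> hom C Y Z g \<Longrightarrow> hom C X' Y' f' \<Longrightarrow> hom C Y' Z' g' \<Longrightarrow>
       c_mtens C (c_cmp C g f) (c_cmp C g' f') = c_cmp C (c_mtens C g g') (c_mtens C f f')"
    and tens_assoc: "hom C X Y f \<Longrightarrow> hom C X' Y' g \<Longrightarrow> hom C X'' Y'' h \<Longrightarrow>
       c_mtens C (c_mtens C f g) h = c_mtens C f (c_mtens C g h)"
    and tens_unit_left: "hom C X Y f \<Longrightarrow> c_mtens C (c_idm C (c_unit C)) f = f"
    and tens_unit_right: "hom C X Y f \<Longrightarrow> c_mtens C f (c_idm C (c_unit C)) = f"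
    and swap_hom: "hom C (c_otens C X Y) (c_otens C Y X) (c_swp C X Y)"
    and swap_inv: "c_cmp C (c_swp C Y X) (c_swp C X Y) = c_idm C (c_otens C X Y)"
    and swap_nat: "hom C X X' f \<Longrightarrow> hom C Y Y' g \<Longrightarrow>
       c_cmp C (c_swp C X' Y') (c_mtens C f g) = c_cmp C (c_mtens C g f) (c_swp C X Y)"
    and swap_hexagon: "c_swp C X (c_otens C Y Z) =
       c_cmp C (c_mtens C (c_idm C Y) (c_swp C X Z)) (c_mtens C (c_swp C X Y) (c_idm C Z))"
    and copy_hom: "hom C X (c_otens C X X) (c_cpy C X)"
    and del_hom: "hom C X (c_unit C) (c_dl C X)"
    and counit_left: "c_cmp C (c_mtens C (c_dl C X) (c_idm C X)) (c_cpy C X) = c_idm C X"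
    and counit_right: "c_cmp C (c_mtens C (c_idm C X) (c_dl C X)) (c_cpy C X) = c_idm C X"
    and coassoc: "c_cmp C (c_mtens C (c_cpy C X) (c_idm C X)) (c_cpy C X) =
                  c_cmp C (c_mtens C (c_idm C X) (c_cpy C X)) (c_cpy C X)"
    and cocomm: "c_cmp C (c_swp C X X) (c_cpy C X) = c_cpy C X"
    and copy_tens: "c_cpy C (c_otens C X Y) =
       c_cmp C (c_mtens C (c_mtens C (c_idm C X) (c_swp C X Y)) (c_idm C Y))
               (c_mtens C (c_cpy C X) (c_cpy C Y))"
    and del_tens: "c_dl C (c_otens C X Y) = c_mtens C (c_dl C X) (c_dl C Y)"
    and copy_unit: "c_cpy C (c_unit C) = c_idm C (c_unit C)"
    and del_unit: "c_dl C (c_unit C) = c_idm C (c_unit C)"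
    and unit_terminal: "hom C X (c_unit C) f \<Longrightarrow> f = c_dl C X"

definition deterministic :: "('o, 'm) mcat \<Rightarrow> 'm \<Rightarrow> bool" where
  "deterministic C f \<longleftrightarrow> c_arr C f \<and>
     c_cmp C (c_cpy C (c_cod C f)) f = c_cmp C (c_mtens C f f) (c_cpy C (c_dom C f))"

definition mpair :: "('o, 'm) mcat \<Rightarrow> 'm \<Rightarrow> 'm \<Rightarrow> 'm" where
  "mpair C f g = c_cmp C (c_mtens C f g) (c_cpy C (c_dom C f))"

definition marg1 :: "('o, 'm) mcat \<Rightarrow> 'o \<Rightarrow> 'o \<Rightarrow> 'm \<Rightarrow> 'm" where
  "marg1 C X Y f = c_cmp C (c_mtens C (c_idm C X) (c_dl C Y)) f"

definition marg2 :: "('o, 'm) mcat \<Rightarrow> 'o \<Rightarrow> 'o \<Rightarrow> 'm \<Rightarrow> 'm" where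
  "marg2 C X Y f = c_cmp C (c_mtens C (c_dl C X) (c_idm C Y)) f"

text \<open>g : X (x) A -> Y is a conditional of f : A -> X (x) Y with respect to X\<close>
definition is_cond1 :: "('o, 'm) mcat \<Rightarrow> 'o \<Rightarrow> 'o \<Rightarrow> 'o \<Rightarrow> 'm \<Rightarrow> 'm \<Rightarrow> bool" where
  "is_cond1 C A X Y f g \<longleftrightarrow> hom C (c_otens C X A) Y g \<and>
     f = c_cmp C (c_mtens C (c_idm C X) g)
          (c_cmp C (c_mtens C (c_cpy C X) (c_idm C A))
            (c_cmp C (c_mtens C (marg1 C X Y f) (c_idm C A)) (c_cpy C A)))"

text \<open>g : Y (x) A -> X is a conditional of f : A -> X (x) Y with respect to Y (symmetric version)\<close>
definition is_cond2 :: "('o, 'm) mcat \<Rightarrow> 'o \<Rightarrow> 'o \<Rightarrow> 'o \<Rightarrow> 'm \<Rightarrow> 'm \<Rightarrow> bool" where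
  "is_cond2 C A X Y f g \<longleftrightarrow> hom C (c_otens C Y A) X g \<and>
     f = c_cmp C (c_swp C Y X)
         (c_cmp C (c_mtens C (c_idm C Y) g)
          (c_cmp C (c_mtens C (c_cpy C Y) (c_idm C A))
            (c_cmp C (c_mtens C (marg2 C X Y f) (c_idm C A)) (c_cpy C A))))"

definition has_conditionals :: "('o, 'm) mcat \<Rightarrow> bool" where
  "has_conditionals C \<longleftrightarrow> (\<forall>A X Y f. hom C A (c_otens C X Y) f \<longrightarrow>
      (\<exists>g. is_cond1 C A X Y f g) \<and> (\<exists>g. is_cond2 C A X Y f g))"

definition ase :: "('o, 'm) mcat \<Rightarrow> 'o \<Rightarrow> 'm \<Rightarrow> 'm \<Rightarrow> 'm \<Rightarrow> bool" where
  "ase C X mu f g \<longleftrightarrow>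
     c_cmp C (mpair C (c_idm C X) f) mu = c_cmp C (mpair C (c_idm C X) g) mu"

definition abscont :: "('o, 'm) mcat \<Rightarrow> 'o \<Rightarrow> 'm \<Rightarrow> 'm \<Rightarrow> bool" where
  "abscont C X mu nu \<longleftrightarrow> (\<forall>Y f g. hom C X Y f \<longrightarrow> hom C X Y g \<longrightarrow>
      ase C X nu f g \<longrightarrow> ase C X mu f g)"

definition precise_supports :: "('o, 'm) mcat \<Rightarrow> bool" where
  "precise_supports C \<longleftrightarrow> (\<forall>X Y x y f mu.
     hom C (c_unit C) X x \<and> deterministic C x \<and> hom C (c_unit C) Y y \<and> deterministic C y \<and>
     hom C X Y f \<and> hom C (c_unit C) X mu \<longrightarrow>
     (abscont C (c_otens C X Y) (c_mtens C x y) (c_cmp C (mpair C (c_idm C X) f) mu)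
       \<longleftrightarrow> abscont C X x mu \<and> abscont C Y y (c_cmp C f x)))"

text \<open>A morphism X ~> Y of Obs(C) is a triple (K, f, o); we also record X and Y.\<close>
datatype ('o, 'm) obs = Obs (osrc: 'o) (otgt: 'o) (ores: 'o) (omor: 'm) (oobs: 'm)

definition obs_hom :: "('o, 'm) mcat \<Rightarrow> 'o \<Rightarrow> 'o \<Rightarrow> ('o, 'm) obs \<Rightarrow> bool" where
  "obs_hom C X Y F \<longleftrightarrow> osrc F = X \<and> otgt F = Y \<and>
     hom C X (c_otens C Y (ores F)) (omor F) \<and>
     hom C (c_unit C) (ores F) (oobs F) \<and> deterministic C (oobs F)"

definition obs_id :: "('o, 'm) mcat \<Rightarrow> 'o \<Rightarrow> ('o, 'm) obs" where
  "obs_id C X = Obs X X (c_unit C) (c_idm C X) (c_idm C (c_unit C))"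

definition obs_comp :: "('o, 'm) mcat \<Rightarrow> ('o, 'm) obs \<Rightarrow> ('o, 'm) obs \<Rightarrow> ('o, 'm) obs" where
  "obs_comp C G F = Obs (osrc F) (otgt G) (c_otens C (ores G) (ores F))
      (c_cmp C (c_mtens C (omor G) (c_idm C (ores F))) (omor F))
      (c_mtens C (oobs G) (oobs F))"

definition obs_tens :: "('o, 'm) mcat \<Rightarrow> ('o, 'm) obs \<Rightarrow> ('o, 'm) obs \<Rightarrow> ('o, 'm) obs" where
  "obs_tens C F1 F2 = Obs (c_otens C (osrc F1) (osrc F2)) (c_otens C (otgt F1) (otgt F2))
      (c_otens C (ores F1) (ores F2))
      (c_cmp C (c_mtens C (c_mtens C (c_idm C (otgt F1)) (c_swp C (ores F1) (otgt F2)))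
                  (c_idm C (ores F2)))
               (c_mtens C (omor F1) (omor F2)))
      (c_mtens C (oobs F1) (oobs F2))"

definition obs_J :: "('o, 'm) mcat \<Rightarrow> 'o \<Rightarrow> 'o \<Rightarrow> 'm \<Rightarrow> ('o, 'm) obs" where
  "obs_J C X Y f = Obs X Y (c_unit C) f (c_idm C (c_unit C))"

definition obs_copy :: "('o, 'm) mcat \<Rightarrow> 'o \<Rightarrow> ('o, 'm) obs" where
  "obs_copy C X = obs_J C X (c_otens C X X) (c_cpy C X)"

definition obs_del :: "('o, 'm) mcat \<Rightarrow> 'o \<Rightarrow> ('o, 'm) obs" where
  "obs_del C X = obs_J C X (c_unit C) (c_dl C X)"

definition obs_fails :: "('o, 'm) mcat \<Rightarrow> ('o, 'm) obs \<Rightarrow> bool" where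
  "obs_fails C P \<longleftrightarrow> \<not> abscont C (ores P) (oobs P) (marg2 C (otgt P) (ores P) (omor P))"

definition state_sim :: "('o, 'm) mcat \<Rightarrow> ('o, 'm) obs \<Rightarrow> ('o, 'm) obs \<Rightarrow> bool" where
  "state_sim C P Q \<longleftrightarrow>
     (\<not> obs_fails C P \<and> \<not> obs_fails C Q \<and>
       (\<exists>g h. is_cond2 C (c_unit C) (otgt P) (ores P) (omor P) g \<and>
              is_cond2 C (c_unit C) (otgt Q) (ores Q) (omor Q) h \<and>
              c_cmp C g (oobs P) = c_cmp C h (oobs Q)))
     \<or> (obs_fails C P \<and> obs_fails C Q)"

text \<open>The relation \<approx> on morphisms X ~> Y; equality in Cond(C).\<close>
definition obs_equiv :: "('o, 'm) mcat \<Rightarrow> ('o, 'm) obs \<Rightarrow> ('o, 'm) obs \<Rightarrow> bool" where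
  "obs_equiv C F G \<longleftrightarrow> (\<forall>A P. obs_hom C (c_unit C) (c_otens C A (osrc F)) P \<longrightarrow>
      state_sim C (obs_comp C (obs_tens C (obs_id C A) F) P)
                  (obs_comp C (obs_tens C (obs_id C A) G) P))"

definition is_failure :: "('o, 'm) mcat \<Rightarrow> 'o \<Rightarrow> ('o, 'm) obs \<Rightarrow> bool" where
  "is_failure C X F \<longleftrightarrow> (\<exists>B. obs_hom C (c_unit C) X B \<and> obs_fails C B \<and> obs_equiv C F B)"

definition cond_copyable :: "('o, 'm) mcat \<Rightarrow> ('o, 'm) obs \<Rightarrow> bool" where
  "cond_copyable C F \<longleftrightarrow> obs_equiv C (obs_comp C (obs_copy C (otgt F)) F)
                                     (obs_comp C (obs_tens C F F) (obs_copy C (osrc F)))"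

definition cond_discardable :: "('o, 'm) mcat \<Rightarrow> ('o, 'm) obs \<Rightarrow> bool" where
  "cond_discardable C F \<longleftrightarrow> obs_equiv C (obs_comp C (obs_del C (otgt F)) F) (obs_del C (osrc F))"

end

theory Submission
  imports Defs
begin

text \<open>
  For states \<open>P = (K, \<psi>, o) : I \<leadsto> X\<close> and \<open>Q = (L, \<phi>, o') : I \<leadsto> A\<close>, the
  \<open>K \<otimes> L\<close>-marginal of \<open>(Id\<^sub>A \<otimes> P) \<bullet> Q\<close> is \<open>\<psi>\<^sub>K \<otimes> \<phi>\<^sub>L\<close>. Precise supports make
  \<open>o \<otimes> o' \<lless> \<psi>\<^sub>K \<otimes> \<phi>\<^sub>L\<close> equivalent to \<open>o \<lless> \<psi>\<^sub>K\<close> and \<open>o' \<lless> \<phi>\<^sub>L\<close>, so this composite fails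
  iff \<open>P\<close> or \<open>Q\<close> does, and any two failing states are \<open>\<approx>\<close>-equivalent. If \<open>P\<close> does not fail,
  a conditional of the composite is assembled from conditionals \<open>g\<close> of \<open>\<psi>\<close> and \<open>h\<close> of \<open>\<phi>\<close>, and its
  value at \<open>o \<otimes> o'\<close> is \<open>h o' \<otimes> g o\<close>, exactly as for \<open>J(g o)\<close> in place of \<open>P\<close>. For strictness
  of failure under composition, a conditional \<open>g\<close> of \<open>\<psi>\<close> exhibits the relevant marginal of
  \<open>F \<bullet> P\<close>, for \<open>F = (K', f, o')\<close>, as \<open>\<langle>id, (del \<otimes> id) f g\<rangle> \<psi>\<^sub>K\<close> up to symmetry, so
  precise supports give \<open>o \<lless> \<psi>\<^sub>K\<close> as soon as \<open>F \<bullet> P\<close> does not fail. Finally, a conditional \<open>K \<rightarrow> I\<close> of a non-failing scalar is the discard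
  map, so the scalar is \<open>J(id\<^sub>I) = Id\<^sub>I\<close>; discarding \<open>\<bottom>\<^sub>I\<close> instead yields a failing scalar.
\<close>

context markov_category begin

abbreviation Arr where "Arr \<equiv> c_arr C"
abbreviation Dom where "Dom \<equiv> c_dom C"
abbreviation Cod where "Cod \<equiv> c_cod C"
abbreviation ccomp (infixr "\<cdot>" 55) where "g \<cdot> f \<equiv> c_cmp C g f"
abbreviation ctens (infixr "\<otimes>" 60) where "f \<otimes> g \<equiv> c_mtens C f g"
abbreviation cotens (infixr "\<oplus>" 60) where "X \<oplus> Y \<equiv> c_otens C X Y"
abbreviation U where "U \<equiv> c_unit C"
abbreviation idm where "idm \<equiv> c_idm C"
abbreviation sw where "sw \<equiv> c_swp C"
abbreviation cp where "cp \<equiv> c_cpy C"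
abbreviation dl where "dl \<equiv> c_dl C"

section \<open>Arrow calculus of a strict Markov category\<close>

lemma homD: "hom C X Y f \<Longrightarrow> Arr f \<and> Dom f = X \<and> Cod f = Y"
  by (simp add: hom_def)

lemma homI: "Arr f \<Longrightarrow> Dom f = X \<Longrightarrow> Cod f = Y \<Longrightarrow> hom C X Y f"
  by (simp add: hom_def)

lemma idm_arr [simp]: "Arr (idm X)" "Dom (idm X) = X" "Cod (idm X) = X"
  using homD[OF id_hom] by auto

lemma swap_arr [simp]: "Arr (sw X Y)" "Dom (sw X Y) = X \<oplus> Y" "Cod (sw X Y) = Y \<oplus> X"
  using homD[OF swap_hom] by auto

lemma copy_arr [simp]: "Arr (cp X)" "Dom (cp X) = X" "Cod (cp X) = X \<oplus> X"
  using homD[OF copy_hom] by auto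

lemma del_arr [simp]: "Arr (dl X)" "Dom (dl X) = X" "Cod (dl X) = U"
  using homD[OF del_hom] by auto

lemma comp_arr [simp]:
  assumes "Arr f" "Arr g" "Cod f = Dom g"
  shows "Arr (g \<cdot> f)" "Dom (g \<cdot> f) = Dom f" "Cod (g \<cdot> f) = Cod g"
  using homD[OF comp_hom[OF homI[OF assms(1) refl assms(3)] homI[OF assms(2) refl refl]]] by auto

lemma tens_arr [simp]:
  assumes "Arr f" "Arr g"
  shows "Arr (f \<otimes> g)" "Dom (f \<otimes> g) = Dom f \<oplus> Dom g" "Cod (f \<otimes> g) = Cod f \<oplus> Cod g"
  using homD[OF tens_hom[OF homI[OF assms(1) refl refl] homI[OF assms(2) refl refl]]] by auto

declare otens_assoc [simp] otens_unit_left [simp] otens_unit_right [simp]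
  tens_id [simp] del_unit [simp] copy_unit [simp] swap_inv [simp]

lemma comp_idm_right [simp]: "Arr f \<Longrightarrow> Dom f = X \<Longrightarrow> f \<cdot> idm X = f"
  using comp_id_right homI by blast

lemma comp_idm_left [simp]: "Arr f \<Longrightarrow> Cod f = X \<Longrightarrow> idm X \<cdot> f = f"
  using comp_id_left homI by blast

lemma comp_assoc_arr [simp]:
  "Arr f \<Longrightarrow> Arr g \<Longrightarrow> Arr h \<Longrightarrow> Cod f = Dom g \<Longrightarrow> Cod g = Dom h \<Longrightarrow> (h \<cdot> g) \<cdot> f = h \<cdot> (g \<cdot> f)"
  using comp_assoc homI by metis

lemma interchange_arr:
  "Arr f \<Longrightarrow> Arr g \<Longrightarrow> Arr f' \<Longrightarrow> Arr g' \<Longrightarrow> Cod f = Dom g \<Longrightarrow> Cod f' = Dom g' \<Longrightarrow>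
   (g \<cdot> f) \<otimes> (g' \<cdot> f') = (g \<otimes> g') \<cdot> (f \<otimes> f')"
  by (rule interchange) (auto intro: homI)

lemma tens_assoc_arr [simp]: "Arr f \<Longrightarrow> Arr g \<Longrightarrow> Arr h \<Longrightarrow> (f \<otimes> g) \<otimes> h = f \<otimes> (g \<otimes> h)"
  by (rule tens_assoc) (auto intro: homI)

lemma tens_unit_left_arr [simp]: "Arr f \<Longrightarrow> idm U \<otimes> f = f"
  by (rule tens_unit_left) (auto intro: homI)

lemma tens_unit_right_arr [simp]: "Arr f \<Longrightarrow> f \<otimes> idm U = f"
  by (rule tens_unit_right) (auto intro: homI)

lemma terminal_arr: "Arr f \<Longrightarrow> Cod f = U \<Longrightarrow> f = dl (Dom f)"
  by (rule unit_terminal) (auto intro: homI)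

lemma del_comp [simp]: "Arr f \<Longrightarrow> Cod f = X \<Longrightarrow> dl X \<cdot> f = dl (Dom f)"
  using terminal_arr[of "dl X \<cdot> f"] by simp

lemma scalar_eq_idm: "Arr f \<Longrightarrow> Dom f = U \<Longrightarrow> Cod f = U \<Longrightarrow> f = idm U"
  using terminal_arr by force

text \<open>The interchange law, oriented so that the simplifier merges parallel composites.\<close>

lemma tens_comp [simp]:
  "Arr f \<Longrightarrow> Arr g \<Longrightarrow> Arr f' \<Longrightarrow> Arr g' \<Longrightarrow> Cod f = Dom g \<Longrightarrow> Cod f' = Dom g' \<Longrightarrow>
   (g \<otimes> g') \<cdot> (f \<otimes> f') = (g \<cdot> f) \<otimes> (g' \<cdot> f')"
  by (simp add: interchange_arr)

lemma tens_comp_comp [simp]: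
  "Arr f \<Longrightarrow> Arr g \<Longrightarrow> Arr f' \<Longrightarrow> Arr g' \<Longrightarrow> Arr h \<Longrightarrow> Cod f = Dom g \<Longrightarrow> Cod f' = Dom g' \<Longrightarrow>
   Cod h = Dom f \<oplus> Dom f' \<Longrightarrow> (g \<otimes> g') \<cdot> ((f \<otimes> f') \<cdot> h) = ((g \<cdot> f) \<otimes> (g' \<cdot> f')) \<cdot> h"
  by (simp flip: comp_assoc_arr)

lemma comp_tens_idm:
  "Arr f \<Longrightarrow> Arr g \<Longrightarrow> Cod f = Dom g \<Longrightarrow> (g \<cdot> f) \<otimes> idm Z = (g \<otimes> idm Z) \<cdot> (f \<otimes> idm Z)"
  using interchange_arr[of f g "idm Z" "idm Z"] by (simp del: tens_comp tens_comp_comp)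

lemma idm_tens_comp:
  "Arr f \<Longrightarrow> Arr g \<Longrightarrow> Cod f = Dom g \<Longrightarrow> idm Z \<otimes> (g \<cdot> f) = (idm Z \<otimes> g) \<cdot> (idm Z \<otimes> f)"
  using interchange_arr[of "idm Z" "idm Z" f g] by (simp del: tens_comp tens_comp_comp)

lemma tens_idm_idm [simp]: "Arr f \<Longrightarrow> idm X \<otimes> idm Y \<otimes> f = idm (X \<oplus> Y) \<otimes> f"
  by (simp flip: tens_assoc_arr)

lemma tens_idm_comp_split:
  assumes "Arr f" "Arr g" "Cod g = Dom f \<oplus> Y"
  shows "(f \<otimes> idm (Y \<oplus> Z)) \<cdot> (g \<otimes> idm Z) = ((f \<otimes> idm Y) \<cdot> g) \<otimes> idm Z"
proof -
  have "(f \<otimes> idm (Y \<oplus> Z)) \<cdot> (g \<otimes> idm Z) = ((f \<otimes> idm Y) \<otimes> idm Z) \<cdot> (g \<otimes> idm Z)"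
    using assms by simp
  also have "\<dots> = ((f \<otimes> idm Y) \<cdot> g) \<otimes> (idm Z \<cdot> idm Z)"
    by (rule tens_comp) (use assms in auto)
  finally show ?thesis by simp
qed

lemma state_tens_left:
  assumes "Arr a" "Dom a = U" "Arr b" "Dom b = U" "Cod b = B"
  shows "(a \<otimes> idm B) \<cdot> b = a \<otimes> b"
proof -
  have "(a \<otimes> idm B) \<cdot> (idm U \<otimes> b) = a \<otimes> b" using assms by (subst tens_comp) auto
  thus ?thesis using assms by simp
qed

lemma state_tens_right:
  assumes "Arr a" "Dom a = U" "Arr b" "Dom b = U" "Cod a = A"
  shows "(idm A \<otimes> b) \<cdot> a = a \<otimes> b"
proof -
  have "(idm A \<otimes> b) \<cdot> (a \<otimes> idm U) = a \<otimes> b" using assms by (subst tens_comp) auto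
  thus ?thesis using assms by simp
qed

lemma del_tens_state:
  assumes "Arr v" "Dom v = U"
  shows "dl A \<otimes> v = v \<cdot> dl A"
proof -
  have "(idm U \<otimes> v) \<cdot> (dl A \<otimes> idm U) = dl A \<otimes> v" using assms by (subst tens_comp) auto
  thus ?thesis using assms by simp
qed

lemma inverse_unique:
  assumes "Arr a" "Arr b" "Arr c" "Dom a = X" "Cod a = Y" "Dom b = Y" "Cod b = X"
    "Dom c = Y" "Cod c = X" "b \<cdot> a = idm X" "a \<cdot> c = idm Y"
  shows "b = c"
proof -
  have "b = b \<cdot> (a \<cdot> c)" using assms by simp
  also have "\<dots> = (b \<cdot> a) \<cdot> c" by (rule sym, rule comp_assoc_arr) (use assms in auto)
  also have "\<dots> = c" using assms by (simp del: comp_assoc_arr)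
  finally show ?thesis .
qed

section \<open>Symmetries\<close>

lemma swap_unit_right [simp]: "sw X U = idm X"
proof -
  let ?s = "sw X U"
  have "sw X (U \<oplus> U) = (idm U \<otimes> sw X U) \<cdot> (sw X U \<otimes> idm U)" by (rule swap_hexagon)
  hence idem: "?s = ?s \<cdot> ?s" by simp
  have inv: "sw U X \<cdot> ?s = idm X" using swap_inv[of U X] by simp
  have "idm X = sw U X \<cdot> (?s \<cdot> ?s)" using inv idem by simp
  also have "\<dots> = ?s" using inv by (simp flip: comp_assoc_arr)
  finally show ?thesis by simp
qed

lemma swap_unit_left [simp]: "sw U X = idm X"
  using swap_inv[of U X] by simp

lemma swap_natural:
  "Arr f \<Longrightarrow> Arr g \<Longrightarrow> sw (Cod f) (Cod g) \<cdot> (f \<otimes> g) = (g \<otimes> f) \<cdot> sw (Dom f) (Dom g)"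
  by (rule swap_nat) (auto intro: homI)

lemma swap_inv_comp [simp]: "Arr h \<Longrightarrow> Cod h = X \<oplus> Y \<Longrightarrow> sw Y X \<cdot> (sw X Y \<cdot> h) = h"
  by (simp flip: comp_assoc_arr)

lemma swap_tens_states:
  "Arr a \<Longrightarrow> Dom a = U \<Longrightarrow> Arr b \<Longrightarrow> Dom b = U \<Longrightarrow> Cod a = A \<Longrightarrow> Cod b = B \<Longrightarrow>
   sw A B \<cdot> (a \<otimes> b) = b \<otimes> a"
  using swap_natural[of a b] by simp

lemma swap_hexagon_left: "sw (X \<oplus> Y) Z = (sw X Z \<otimes> idm Y) \<cdot> (idm X \<otimes> sw Y Z)"
  by (rule inverse_unique[of "sw Z (X \<oplus> Y)" _ _ "Z \<oplus> X \<oplus> Y" "X \<oplus> Y \<oplus> Z"])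
    (simp_all, simp add: swap_hexagon)

lemma swap_copy_shuffle:
  "(idm Y \<otimes> sw Y X \<otimes> idm X) \<cdot> sw (X \<oplus> X) (Y \<oplus> Y) =
   (sw X Y \<otimes> sw X Y) \<cdot> (idm X \<otimes> sw X Y \<otimes> idm Y)"
  by (simp add: swap_hexagon swap_hexagon_left) (subst comp_tens_idm, simp_all)

lemma copy_swap: "cp (Y \<oplus> X) \<cdot> sw X Y = (sw X Y \<otimes> sw X Y) \<cdot> cp (X \<oplus> Y)"
proof -
  let ?h = "(idm X \<otimes> sw X Y \<otimes> idm Y) \<cdot> (cp X \<otimes> cp Y)"
  have "(cp Y \<otimes> cp X) \<cdot> sw X Y = sw (X \<oplus> X) (Y \<oplus> Y) \<cdot> (cp X \<otimes> cp Y)"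
    using swap_natural[of "cp X" "cp Y"] by simp
  hence "cp (Y \<oplus> X) \<cdot> sw X Y = ((idm Y \<otimes> sw Y X \<otimes> idm X) \<cdot> sw (X \<oplus> X) (Y \<oplus> Y)) \<cdot> (cp X \<otimes> cp Y)"
    by (simp add: copy_tens del: tens_comp tens_comp_comp)
  also have "\<dots> = (sw X Y \<otimes> sw X Y) \<cdot> ?h"
    by (simp only: swap_copy_shuffle) (simp del: tens_comp tens_comp_comp)
  finally show ?thesis by (simp add: copy_tens del: tens_comp tens_comp_comp)
qed

lemma swap_comp_copy:
  assumes "Arr f" "Dom f = K" "Cod f = Y"
  shows "sw K Y \<cdot> ((idm K \<otimes> f) \<cdot> cp K) = (f \<otimes> idm K) \<cdot> cp K"
proof -
  have nat: "sw K Y \<cdot> (idm K \<otimes> f) = (f \<otimes> idm K) \<cdot> sw K K"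
    using swap_natural[of "idm K" f] assms by simp
  have "sw K Y \<cdot> ((idm K \<otimes> f) \<cdot> cp K) = (sw K Y \<cdot> (idm K \<otimes> f)) \<cdot> cp K"
    using assms by simp
  also have "\<dots> = (f \<otimes> idm K) \<cdot> (sw K K \<cdot> cp K)"
    using assms by (simp add: nat del: tens_comp)
  finally show ?thesis by (simp add: cocomm)
qed

lemma state_tens_middle:
  assumes c: "Arr c" "Dom c = U" "Cod c = M" and d: "Arr d" "Dom d = U" "Cod d = L \<oplus> Z"
  shows "(idm L \<otimes> c \<otimes> idm Z) \<cdot> d = (sw M L \<otimes> idm Z) \<cdot> (c \<otimes> d)"
proof -
  have nat: "sw M L \<cdot> (c \<otimes> idm L) = idm L \<otimes> c"
    using swap_natural[of c "idm L"] c by simp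
  have "c \<otimes> d = ((c \<otimes> idm L) \<otimes> idm Z) \<cdot> d"
    using state_tens_left[OF c(1,2) d(1,2,3)] c by simp
  hence "(sw M L \<otimes> idm Z) \<cdot> (c \<otimes> d) = ((sw M L \<cdot> (c \<otimes> idm L)) \<otimes> idm Z) \<cdot> d"
    using c d by (simp del: tens_assoc_arr)
  also have "\<dots> = (idm L \<otimes> c \<otimes> idm Z) \<cdot> d"
    using c by (simp add: nat)
  finally show ?thesis ..
qed

section \<open>Absolute continuity and precise supports\<close>

lemma ase_iff:
  "Arr f \<Longrightarrow> Arr g \<Longrightarrow> Arr mu \<Longrightarrow> Dom f = X \<Longrightarrow> Dom g = X \<Longrightarrow> Cod mu = X \<Longrightarrow>
   ase C X mu f g \<longleftrightarrow> (idm X \<otimes> f) \<cdot> (cp X \<cdot> mu) = (idm X \<otimes> g) \<cdot> (cp X \<cdot> mu)"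
  by (simp add: ase_def mpair_def)

lemma abscont_refl: "abscont C X mu mu"
  by (simp add: abscont_def)

lemma abscont_comp_deterministic_section:
  assumes s: "Arr s" "Dom s = X" "Cod s = X'" "Arr t" "Dom t = X'" "Cod t = X" "t \<cdot> s = idm X"
    and det: "cp X' \<cdot> s = (s \<otimes> s) \<cdot> cp X"
    and mu: "Arr mu" "Dom mu = U" "Cod mu = X" and nu: "Arr nu" "Dom nu = U" "Cod nu = X"
    and ac: "abscont C X mu nu"
  shows "abscont C X' (s \<cdot> mu) (s \<cdot> nu)"
  unfolding abscont_def
proof (intro allI impI)
  fix Y f g assume f: "hom C X' Y f" and g: "hom C X' Y g" and e: "ase C X' (s \<cdot> nu) f g"
  have det_comp: "cp X' \<cdot> (s \<cdot> h) = (s \<otimes> s) \<cdot> (cp X \<cdot> h)" if "Arr h" "Cod h = X" for h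
  proof -
    have "cp X' \<cdot> (s \<cdot> h) = (cp X' \<cdot> s) \<cdot> h" using that s by simp
    also have "\<dots> = (s \<otimes> s) \<cdot> (cp X \<cdot> h)" using that s by (simp add: det del: tens_comp tens_comp_comp)
    finally show ?thesis .
  qed
  have pull: "(idm X' \<otimes> k) \<cdot> (cp X' \<cdot> (s \<cdot> h)) = (s \<otimes> idm Y) \<cdot> ((idm X \<otimes> (k \<cdot> s)) \<cdot> (cp X \<cdot> h))"
    if "hom C X' Y k" "Arr h" "Cod h = X" for k h
    using that s by (simp add: det_comp hom_def)
  have cancel: "A = B"
    if "(s \<otimes> idm Y) \<cdot> A = (s \<otimes> idm Y) \<cdot> B" "Arr A" "Arr B" "Cod A = X \<oplus> Y" "Cod B = X \<oplus> Y" for A B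
  proof -
    have "(t \<otimes> idm Y) \<cdot> ((s \<otimes> idm Y) \<cdot> A) = (t \<otimes> idm Y) \<cdot> ((s \<otimes> idm Y) \<cdot> B)" using that(1) by simp
    thus ?thesis using that(2-) s by simp
  qed
  have "(idm X \<otimes> (f \<cdot> s)) \<cdot> (cp X \<cdot> nu) = (idm X \<otimes> (g \<cdot> s)) \<cdot> (cp X \<cdot> nu)"
    by (rule cancel) (use e pull[OF f nu(1,3)] pull[OF g nu(1,3)] f g s nu in \<open>auto simp: ase_iff hom_def\<close>)
  hence "ase C X nu (f \<cdot> s) (g \<cdot> s)" using f g s nu by (simp add: ase_iff hom_def)
  hence "ase C X mu (f \<cdot> s) (g \<cdot> s)" using ac f g s unfolding abscont_def by (auto simp: hom_def)
  thus "ase C X' (s \<cdot> mu) f g"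
    using pull[OF f mu(1,3)] pull[OF g mu(1,3)] f g s mu by (simp add: ase_iff hom_def)
qed

lemma abscont_swap:
  assumes "Arr mu" "Dom mu = U" "Cod mu = X \<oplus> Y" "Arr nu" "Dom nu = U" "Cod nu = X \<oplus> Y"
    and "abscont C (X \<oplus> Y) mu nu"
  shows "abscont C (Y \<oplus> X) (sw X Y \<cdot> mu) (sw X Y \<cdot> nu)"
  by (rule abscont_comp_deterministic_section[where t = "sw Y X"]) (use assms copy_swap in auto)

lemma deterministic_state_iff:
  "Arr x \<Longrightarrow> Dom x = U \<Longrightarrow> deterministic C x \<longleftrightarrow> cp (Cod x) \<cdot> x = x \<otimes> x"
  by (simp add: deterministic_def)

lemma deterministic_tens_states:
  assumes x: "Arr x" "Dom x = U" "deterministic C x" and y: "Arr y" "Dom y = U" "deterministic C y"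
  shows "deterministic C (x \<otimes> y)"
proof -
  let ?X = "Cod x" and ?Y = "Cod y"
  have "cp (?X \<oplus> ?Y) \<cdot> (x \<otimes> y) = (idm ?X \<otimes> sw ?X ?Y \<otimes> idm ?Y) \<cdot> ((cp ?X \<cdot> x) \<otimes> (cp ?Y \<cdot> y))"
    using x y by (simp add: copy_tens del: tens_comp_comp)
  also have "\<dots> = (idm ?X \<otimes> sw ?X ?Y \<otimes> idm ?Y) \<cdot> (x \<otimes> (x \<otimes> y) \<otimes> y)"
    using x y by (simp add: deterministic_state_iff)
  also have "\<dots> = x \<otimes> (sw ?X ?Y \<cdot> (x \<otimes> y)) \<otimes> y"
    using x y by (simp del: tens_assoc_arr)
  also have "\<dots> = x \<otimes> y \<otimes> x \<otimes> y"
    using x y swap_tens_states by simp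
  finally show ?thesis using x y by (simp add: deterministic_state_iff)
qed

lemma precise_supportsD:
  assumes ps: "precise_supports C"
    and x: "Arr x" "Dom x = U" "Cod x = X" "deterministic C x"
    and y: "Arr y" "Dom y = U" "Cod y = Y" "deterministic C y"
    and f: "Arr f" "Dom f = X" "Cod f = Y" and mu: "Arr mu" "Dom mu = U" "Cod mu = X"
  shows "abscont C (X \<oplus> Y) (x \<otimes> y) (mpair C (idm X) f \<cdot> mu) \<longleftrightarrow>
         abscont C X x mu \<and> abscont C Y y (f \<cdot> x)"
  using ps[unfolded precise_supports_def, rule_format, of X x Y y f mu] x y f mu
  by (simp add: hom_def)

lemma mpair_const_state:
  assumes a: "Arr a" "Dom a = U" "Cod a = X" and b: "Arr b" "Dom b = U" "Cod b = Y"
  shows "mpair C (idm X) (b \<cdot> dl X) \<cdot> a = a \<otimes> b"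
proof -
  have "mpair C (idm X) (b \<cdot> dl X) \<cdot> a = (idm X \<otimes> b) \<cdot> (((idm X \<otimes> dl X) \<cdot> cp X) \<cdot> a)"
    using a b by (simp add: mpair_def idm_tens_comp del: tens_comp tens_comp_comp)
  also have "\<dots> = a \<otimes> b"
    using a b by (simp add: counit_right state_tens_right)
  finally show ?thesis .
qed

lemma precise_supports_tens:
  assumes ps: "precise_supports C"
    and x: "Arr x" "Dom x = U" "Cod x = X" "deterministic C x"
    and y: "Arr y" "Dom y = U" "Cod y = Y" "deterministic C y"
    and a: "Arr a" "Dom a = U" "Cod a = X" and b: "Arr b" "Dom b = U" "Cod b = Y"
  shows "abscont C (X \<oplus> Y) (x \<otimes> y) (a \<otimes> b) \<longleftrightarrow> abscont C X x a \<and> abscont C Y y b"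
  using precise_supportsD[OF ps x y, of "b \<cdot> dl X" a] a b x
  by (simp add: mpair_const_state[OF a b])

section \<open>Marginals and conditionals of states\<close>

lemma marg2_arr [simp]:
  "Arr p \<Longrightarrow> Cod p = X \<oplus> K \<Longrightarrow> Arr (marg2 C X K p)"
  "Arr p \<Longrightarrow> Cod p = X \<oplus> K \<Longrightarrow> Dom (marg2 C X K p) = Dom p"
  "Arr p \<Longrightarrow> Cod p = X \<oplus> K \<Longrightarrow> Cod (marg2 C X K p) = K"
  by (auto simp: marg2_def)

lemma is_cond2_state_iff:
  assumes p: "Arr p" "Dom p = U" "Cod p = X \<oplus> K"
  shows "is_cond2 C U X K p g \<longleftrightarrow> hom C K X g \<and> p = (g \<otimes> idm K) \<cdot> (cp K \<cdot> marg2 C X K p)"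
proof -
  let ?v = "marg2 C X K p"
  have v: "Arr ?v" "Dom ?v = U" "Cod ?v = K" using p by simp_all
  have unfolded: "is_cond2 C U X K p g \<longleftrightarrow> hom C K X g \<and> p = sw K X \<cdot> ((idm K \<otimes> g) \<cdot> (cp K \<cdot> ?v))"
    using p v by (simp add: is_cond2_def)
  have swapped: "sw K X \<cdot> ((idm K \<otimes> g) \<cdot> (cp K \<cdot> ?v)) = (g \<otimes> idm K) \<cdot> (cp K \<cdot> ?v)"
    if "hom C K X g"
  proof -
    have "sw K X \<cdot> ((idm K \<otimes> g) \<cdot> (cp K \<cdot> ?v)) = (sw K X \<cdot> ((idm K \<otimes> g) \<cdot> cp K)) \<cdot> ?v"
      using that v by (simp add: hom_def del: tens_comp)
    thus ?thesis using that v by (simp add: hom_def swap_comp_copy del: tens_comp)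
  qed
  show ?thesis
  proof (cases "hom C K X g")
    case True
    show ?thesis unfolding unfolded swapped[OF True] ..
  qed (simp add: unfolded)
qed

lemma cond2_exists:
  "has_conditionals C \<Longrightarrow> Arr f \<Longrightarrow> Dom f = A \<Longrightarrow> Cod f = X \<oplus> K \<Longrightarrow> \<exists>g. is_cond2 C A X K f g"
  unfolding has_conditionals_def by (blast intro: homI)

lemma marg2_whisker:
  assumes p: "Arr p" "Dom p = U" "Cod p = X \<oplus> K" and q: "Arr q" "Dom q = U" "Cod q = A \<oplus> L"
  shows "marg2 C (A \<oplus> X) (K \<oplus> L) ((idm A \<otimes> p \<otimes> idm L) \<cdot> q) = marg2 C X K p \<otimes> marg2 C A L q"
proof -
  let ?v = "(dl X \<otimes> idm K) \<cdot> p" and ?w = "(dl A \<otimes> idm L) \<cdot> q"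
  have v: "Arr ?v" "Dom ?v = U" "Cod ?v = K" using p by auto
  have "marg2 C (A \<oplus> X) (K \<oplus> L) ((idm A \<otimes> p \<otimes> idm L) \<cdot> q)
     = ((dl A \<otimes> dl X \<otimes> idm (K \<oplus> L)) \<cdot> (idm A \<otimes> p \<otimes> idm L)) \<cdot> q"
    using p q by (simp add: marg2_def del_tens del: tens_comp tens_comp_comp tens_id)
  also have "(dl A \<otimes> dl X \<otimes> idm (K \<oplus> L)) \<cdot> (idm A \<otimes> p \<otimes> idm L) =
             dl A \<otimes> ((dl X \<otimes> idm (K \<oplus> L)) \<cdot> (p \<otimes> idm L))"
    using p by (subst tens_comp) auto
  also have "(dl X \<otimes> idm (K \<oplus> L)) \<cdot> (p \<otimes> idm L) = ?v \<otimes> idm L"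
    using p by (subst tens_idm_comp_split) auto
  also have "dl A \<otimes> (?v \<otimes> idm L) = (?v \<otimes> idm L) \<cdot> (dl A \<otimes> idm L)"
    using v del_tens_state[OF v(1,2), of A] by (simp flip: tens_assoc_arr)
  also have "((?v \<otimes> idm L) \<cdot> (dl A \<otimes> idm L)) \<cdot> q = ?v \<otimes> ?w"
    using v q by (simp add: state_tens_left del: tens_comp tens_comp_comp)
  finally show ?thesis by (simp add: marg2_def)
qed

lemma is_cond2_whisker:
  assumes p: "Arr p" "Dom p = U" "Cod p = X \<oplus> K" and q: "Arr q" "Dom q = U" "Cod q = A \<oplus> L"
    and g: "is_cond2 C U X K p g" and h: "is_cond2 C U A L q h"
  shows "is_cond2 C U (A \<oplus> X) (K \<oplus> L) ((idm A \<otimes> p \<otimes> idm L) \<cdot> q) ((h \<otimes> g) \<cdot> sw K L)"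
proof -
  let ?v = "marg2 C X K p" and ?w = "marg2 C A L q"
  let ?c = "cp K \<cdot> ?v" and ?d = "cp L \<cdot> ?w" and ?m = "(idm A \<otimes> p \<otimes> idm L) \<cdot> q"
  have c: "Arr ?c" "Dom ?c = U" "Cod ?c = K \<oplus> K" and d: "Arr ?d" "Dom ?d = U" "Cod ?d = L \<oplus> L"
    using p q by simp_all
  obtain g': "Arr g" "Dom g = K" "Cod g = X" and p_eq: "p = (g \<otimes> idm K) \<cdot> ?c"
    using g is_cond2_state_iff[OF p] by (auto simp: hom_def)
  obtain h': "Arr h" "Dom h = L" "Cod h = A" and q_eq: "q = (h \<otimes> idm L) \<cdot> ?d"
    using h is_cond2_state_iff[OF q] by (auto simp: hom_def)
  have m: "Arr ?m" "Dom ?m = U" "Cod ?m = (A \<oplus> X) \<oplus> (K \<oplus> L)"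
    using p q by simp_all
  have "?m = ((idm A \<otimes> p \<otimes> idm L) \<cdot> (h \<otimes> idm L)) \<cdot> ?d"
    using p h' d by (subst q_eq) (simp del: tens_comp tens_comp_comp)
  also have "(idm A \<otimes> p \<otimes> idm L) \<cdot> (h \<otimes> idm L) = h \<otimes> ((g \<otimes> idm K) \<cdot> ?c) \<otimes> idm L"
    using p h' p_eq by simp
  also have "\<dots> = (h \<otimes> g \<otimes> idm (K \<oplus> L)) \<cdot> (idm L \<otimes> ?c \<otimes> idm L)"
    using g' h' c by (simp add: tens_idm_comp_split)
  also have "(\<dots>) \<cdot> ?d = (h \<otimes> g \<otimes> idm (K \<oplus> L)) \<cdot> ((idm L \<otimes> ?c \<otimes> idm L) \<cdot> ?d)"
    using g' h' c d by (simp del: tens_comp tens_comp_comp)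
  also have "\<dots> = (h \<otimes> g \<otimes> idm (K \<oplus> L)) \<cdot> ((sw (K \<oplus> K) L \<otimes> idm L) \<cdot> (?c \<otimes> ?d))"
    using state_tens_middle[OF c d] by simp
  also have "\<dots> = (((h \<otimes> g) \<cdot> sw K L) \<otimes> idm (K \<oplus> L)) \<cdot> (cp (K \<oplus> L) \<cdot> (?v \<otimes> ?w))"
    using g' h' p q by (simp add: copy_tens swap_hexagon_left comp_tens_idm)
  finally have "?m = (((h \<otimes> g) \<cdot> sw K L) \<otimes> idm (K \<oplus> L)) \<cdot> (cp (K \<oplus> L) \<cdot> (?v \<otimes> ?w))" .
  thus ?thesis
    unfolding is_cond2_state_iff[OF m] marg2_whisker[OF p q] using g' h' by (simp add: hom_def)
qed

lemma marg2_tens_shuffle: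
  assumes p: "Arr p" "Cod p = X \<oplus> K" and q: "Arr q" "Cod q = Y \<oplus> L"
  shows "marg2 C (X \<oplus> Y) (K \<oplus> L) ((idm X \<otimes> sw K Y \<otimes> idm L) \<cdot> (p \<otimes> q)) =
         marg2 C X K p \<otimes> marg2 C Y L q"
proof -
  have del_swap: "(dl Y \<otimes> idm K) \<cdot> sw K Y = idm K \<otimes> dl Y"
    using swap_natural[of "idm K" "dl Y"] by simp
  have "(dl X \<otimes> dl Y \<otimes> idm (K \<oplus> L)) \<cdot> (idm X \<otimes> sw K Y \<otimes> idm L) =
        dl X \<otimes> ((dl Y \<otimes> idm (K \<oplus> L)) \<cdot> (sw K Y \<otimes> idm L))"
    by (subst tens_comp) auto
  also have "\<dots> = (dl X \<otimes> idm K) \<otimes> (dl Y \<otimes> idm L)"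
    by (simp add: tens_idm_comp_split del_swap del: tens_comp)
  finally have shuffle: "(dl X \<otimes> dl Y \<otimes> idm (K \<oplus> L)) \<cdot> (idm X \<otimes> sw K Y \<otimes> idm L) =
                         (dl X \<otimes> idm K) \<otimes> (dl Y \<otimes> idm L)" .
  have "marg2 C (X \<oplus> Y) (K \<oplus> L) ((idm X \<otimes> sw K Y \<otimes> idm L) \<cdot> (p \<otimes> q)) =
        ((dl X \<otimes> dl Y \<otimes> idm (K \<oplus> L)) \<cdot> (idm X \<otimes> sw K Y \<otimes> idm L)) \<cdot> (p \<otimes> q)"
    using p q by (simp add: marg2_def del_tens del: tens_comp tens_comp_comp tens_id)
  also have "\<dots> = marg2 C X K p \<otimes> marg2 C Y L q"
    unfolding shuffle using p q by (simp add: marg2_def del: tens_assoc_arr)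
  finally show ?thesis .
qed

lemma marg2_comp_tens_idm:
  assumes f: "Arr f" "Cod f = Y \<oplus> L" and p: "Arr p" "Cod p = Dom f \<oplus> K"
  shows "marg2 C Y (L \<oplus> K) ((f \<otimes> idm K) \<cdot> p) = (((dl Y \<otimes> idm L) \<cdot> f) \<otimes> idm K) \<cdot> p"
proof -
  have "marg2 C Y (L \<oplus> K) ((f \<otimes> idm K) \<cdot> p) = ((dl Y \<otimes> idm (L \<oplus> K)) \<cdot> (f \<otimes> idm K)) \<cdot> p"
    using f p by (simp add: marg2_def del: tens_comp tens_comp_comp tens_id)
  thus ?thesis using f by (simp add: tens_idm_comp_split del: tens_comp)
qed

section \<open>States of Obs(C)\<close>

lemma obs_homD:
  assumes "obs_hom C X Y P"
  shows "osrc P = X" "otgt P = Y" "Arr (omor P)" "Dom (omor P) = X" "Cod (omor P) = Y \<oplus> ores P"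
    "Arr (oobs P)" "Dom (oobs P) = U" "Cod (oobs P) = ores P" "deterministic C (oobs P)"
  using assms by (auto simp: obs_hom_def hom_def)

lemma obs_whisker_state:
  assumes "obs_hom C U X P" "obs_hom C U A Q"
  shows "obs_comp C (obs_tens C (obs_id C A) P) Q =
         Obs U (A \<oplus> X) (ores P \<oplus> ores Q) ((idm A \<otimes> omor P \<otimes> idm (ores Q)) \<cdot> omor Q) (oobs P \<otimes> oobs Q)"
  using obs_homD[OF assms(1)] obs_homD[OF assms(2)]
  by (simp add: obs_comp_def obs_tens_def obs_id_def)

lemma obs_comp_state:
  assumes "obs_hom C X Y F" "obs_hom C U X P"
  shows "obs_comp C F P =
         Obs U Y (ores F \<oplus> ores P) ((omor F \<otimes> idm (ores P)) \<cdot> omor P) (oobs F \<otimes> oobs P)"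
  using obs_homD[OF assms(1)] obs_homD[OF assms(2)] by (simp add: obs_comp_def)

lemma obs_tens_states:
  assumes "obs_hom C U X P" "obs_hom C U Y Q"
  shows "obs_tens C P Q =
         Obs U (X \<oplus> Y) (ores P \<oplus> ores Q)
           ((idm X \<otimes> sw (ores P) Y \<otimes> idm (ores Q)) \<cdot> (omor P \<otimes> omor Q)) (oobs P \<otimes> oobs Q)"
  using obs_homD[OF assms(1)] obs_homD[OF assms(2)] by (simp add: obs_tens_def)

lemma obs_comp_state_hom:
  assumes "obs_hom C X Y F" "obs_hom C U X P"
  shows "obs_hom C U Y (obs_comp C F P)"
  using obs_homD[OF assms(1)] obs_homD[OF assms(2)]
  by (simp add: obs_comp_state[OF assms] obs_hom_def hom_def deterministic_tens_states)

lemma obs_tens_states_hom: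
  assumes "obs_hom C U X P" "obs_hom C U Y Q"
  shows "obs_hom C U (X \<oplus> Y) (obs_tens C P Q)"
  using obs_homD[OF assms(1)] obs_homD[OF assms(2)]
  by (simp add: obs_tens_states[OF assms] obs_hom_def hom_def deterministic_tens_states)

lemma obs_whisker_state_hom:
  assumes "obs_hom C U X P" "obs_hom C U A Q"
  shows "obs_hom C U (A \<oplus> X) (obs_comp C (obs_tens C (obs_id C A) P) Q)"
  using obs_homD[OF assms(1)] obs_homD[OF assms(2)]
  by (simp add: obs_whisker_state[OF assms] obs_hom_def hom_def deterministic_tens_states)

lemma obs_J_hom: "Arr f \<Longrightarrow> Dom f = X \<Longrightarrow> Cod f = Y \<Longrightarrow> obs_hom C X Y (obs_J C X Y f)"
  by (simp add: obs_J_def obs_hom_def hom_def deterministic_def)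

lemma obs_J_not_fails: "Arr x \<Longrightarrow> Dom x = U \<Longrightarrow> Cod x = X \<Longrightarrow> \<not> obs_fails C (obs_J C U X x)"
  by (simp add: obs_J_def obs_fails_def marg2_def abscont_refl)

lemma obs_fails_whisker:
  assumes ps: "precise_supports C" and P: "obs_hom C U X P" and Q: "obs_hom C U A Q"
  shows "obs_fails C (obs_comp C (obs_tens C (obs_id C A) P) Q) \<longleftrightarrow> obs_fails C P \<or> obs_fails C Q"
  using obs_homD[OF P] obs_homD[OF Q]
  by (simp add: obs_fails_def obs_whisker_state[OF P Q] marg2_whisker precise_supports_tens[OF ps])

lemma obs_fails_tens:
  assumes ps: "precise_supports C" and P: "obs_hom C U X P" and Q: "obs_hom C U Y Q"
  shows "obs_fails C (obs_tens C P Q) \<longleftrightarrow> obs_fails C P \<or> obs_fails C Q"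
  using obs_homD[OF P] obs_homD[OF Q]
  by (simp add: obs_fails_def obs_tens_states[OF P Q] marg2_tens_shuffle precise_supports_tens[OF ps])

lemma obs_fails_comp:
  assumes ps: "precise_supports C" and hc: "has_conditionals C"
    and F: "obs_hom C X Y F" and P: "obs_hom C U X P" and fails: "obs_fails C P"
  shows "obs_fails C (obs_comp C F P)"
proof (rule ccontr)
  note f = obs_homD[OF F] and p = obs_homD[OF P]
  let ?K = "ores P" and ?L = "ores F"
  let ?v = "marg2 C X ?K (omor P)" and ?h = "(dl Y \<otimes> idm ?L) \<cdot> omor F"
  have v: "Arr ?v" "Dom ?v = U" "Cod ?v = ?K" and h: "Arr ?h" "Dom ?h = X" "Cod ?h = ?L"
    using f p by simp_all
  obtain g where "is_cond2 C U X ?K (omor P) g"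
    using cond2_exists[OF hc p(3,4,5)] by blast
  then obtain g: "Arr g" "Dom g = ?K" "Cod g = X" and p_eq: "omor P = (g \<otimes> idm ?K) \<cdot> (cp ?K \<cdot> ?v)"
    using is_cond2_state_iff[OF p(3,4,5)] by (auto simp: hom_def)
  let ?N = "mpair C (idm ?K) (?h \<cdot> g) \<cdot> ?v"
  have N: "Arr ?N" "Dom ?N = U" "Cod ?N = ?K \<oplus> ?L"
    using v g h by (simp_all add: mpair_def)
  have "marg2 C Y (?L \<oplus> ?K) ((omor F \<otimes> idm ?K) \<cdot> omor P) = (?h \<otimes> idm ?K) \<cdot> omor P"
    using f p by (simp add: marg2_comp_tens_idm)
  also have "\<dots> = (?h \<otimes> idm ?K) \<cdot> ((g \<otimes> idm ?K) \<cdot> (cp ?K \<cdot> ?v))"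
    using p_eq by (rule arg_cong)
  also have "\<dots> = ((?h \<cdot> g) \<otimes> idm ?K) \<cdot> (cp ?K \<cdot> ?v)"
    using g h v by simp
  also have "\<dots> = (sw ?K ?L \<cdot> ((idm ?K \<otimes> (?h \<cdot> g)) \<cdot> cp ?K)) \<cdot> ?v"
  proof -
    have "sw ?K ?L \<cdot> ((idm ?K \<otimes> (?h \<cdot> g)) \<cdot> cp ?K) = ((?h \<cdot> g) \<otimes> idm ?K) \<cdot> cp ?K"
      by (rule swap_comp_copy) (use g h in auto)
    thus ?thesis using g h v by simp
  qed
  also have "\<dots> = sw ?K ?L \<cdot> ?N"
    using g h v by (simp add: mpair_def)
  finally have marg: "marg2 C Y (?L \<oplus> ?K) ((omor F \<otimes> idm ?K) \<cdot> omor P) = sw ?K ?L \<cdot> ?N" .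
  assume "\<not> obs_fails C (obs_comp C F P)"
  hence "abscont C (?L \<oplus> ?K) (oobs F \<otimes> oobs P) (sw ?K ?L \<cdot> ?N)"
    by (simp add: obs_fails_def obs_comp_state[OF F P] marg)
  hence "abscont C (?K \<oplus> ?L) (sw ?L ?K \<cdot> (oobs F \<otimes> oobs P)) (sw ?L ?K \<cdot> (sw ?K ?L \<cdot> ?N))"
    by (rule abscont_swap[rotated -1]) (use N f p in auto)
  hence "abscont C (?K \<oplus> ?L) (oobs P \<otimes> oobs F) ?N"
    using swap_tens_states f p N by simp
  hence "abscont C ?K (oobs P) ?v"
    using precise_supportsD[OF ps, of "oobs P" ?K "oobs F" ?L "?h \<cdot> g" ?v] f p g h v by simp
  thus False
    using fails by (simp add: obs_fails_def p)
qed

section \<open>States of Cond(C)\<close>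

lemma state_simI:
  "\<not> obs_fails C R \<Longrightarrow> \<not> obs_fails C R' \<Longrightarrow>
   is_cond2 C U (otgt R) (ores R) (omor R) g \<Longrightarrow> is_cond2 C U (otgt R') (ores R') (omor R') g' \<Longrightarrow>
   g \<cdot> oobs R = g' \<cdot> oobs R' \<Longrightarrow> state_sim C R R'"
  by (auto simp: state_sim_def)

lemma obs_equiv_refl:
  assumes hc: "has_conditionals C" and P: "obs_hom C U X P"
  shows "obs_equiv C P P"
  unfolding obs_equiv_def
proof (intro allI impI)
  fix A Q assume "obs_hom C U (A \<oplus> osrc P) Q"
  hence "obs_hom C U A Q" using obs_homD(1)[OF P] by simp
  note r = obs_homD[OF obs_whisker_state_hom[OF P this]]
  obtain g where "is_cond2 C U (A \<oplus> X) (ores (obs_comp C (obs_tens C (obs_id C A) P) Q))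
                   (omor (obs_comp C (obs_tens C (obs_id C A) P) Q)) g"
    using cond2_exists[OF hc r(3,4,5)] by blast
  thus "state_sim C (obs_comp C (obs_tens C (obs_id C A) P) Q) (obs_comp C (obs_tens C (obs_id C A) P) Q)"
    using r(2) unfolding state_sim_def by auto
qed

lemma is_failureI: "has_conditionals C \<Longrightarrow> obs_hom C U X P \<Longrightarrow> obs_fails C P \<Longrightarrow> is_failure C X P"
  unfolding is_failure_def using obs_equiv_refl by blast

lemma obs_equiv_failing:
  assumes ps: "precise_supports C" and P: "obs_hom C U X P" and P': "obs_hom C U X P'"
    and fails: "obs_fails C P" "obs_fails C P'"
  shows "obs_equiv C P P'"
  unfolding obs_equiv_def
proof (intro allI impI)
  fix A Q assume "obs_hom C U (A \<oplus> osrc P) Q"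
  hence Q: "obs_hom C U A Q" using obs_homD(1)[OF P] by simp
  show "state_sim C (obs_comp C (obs_tens C (obs_id C A) P) Q) (obs_comp C (obs_tens C (obs_id C A) P') Q)"
    unfolding state_sim_def using obs_fails_whisker[OF ps P Q] obs_fails_whisker[OF ps P' Q] fails by simp
qed

lemma is_cond2_state_unit: "Arr x \<Longrightarrow> Dom x = U \<Longrightarrow> Cod x = X \<Longrightarrow> is_cond2 C U X U x x"
  by (simp add: is_cond2_state_iff hom_def marg2_def)

lemma obs_equiv_J_cond2:
  assumes ps: "precise_supports C" and hc: "has_conditionals C"
    and P: "obs_hom C U X P" and not_fails: "\<not> obs_fails C P"
    and g: "is_cond2 C U X (ores P) (omor P) g"
  shows "obs_equiv C P (obs_J C U X (g \<cdot> oobs P))"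
  unfolding obs_equiv_def
proof (intro allI impI)
  note p = obs_homD[OF P]
  let ?x = "g \<cdot> oobs P"
  have g': "Arr g" "Dom g = ores P" "Cod g = X"
    using g by (simp_all add: is_cond2_def hom_def)
  have x: "Arr ?x" "Dom ?x = U" "Cod ?x = X" using g' p by simp_all
  have J: "obs_hom C U X (obs_J C U X ?x)" by (rule obs_J_hom[OF x])
  fix A Q assume "obs_hom C U (A \<oplus> osrc P) Q"
  hence Q: "obs_hom C U A Q" using p by simp
  note q = obs_homD[OF Q]
  note whisker_P = obs_whisker_state[OF P Q] and whisker_J = obs_whisker_state[OF J Q]
  show "state_sim C (obs_comp C (obs_tens C (obs_id C A) P) Q)
                    (obs_comp C (obs_tens C (obs_id C A) (obs_J C U X ?x)) Q)"
  proof (cases "obs_fails C Q")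
    case True
    thus ?thesis
      unfolding state_sim_def using obs_fails_whisker[OF ps P Q] obs_fails_whisker[OF ps J Q] by simp
  next
    case False
    obtain h where h: "is_cond2 C U A (ores Q) (omor Q) h"
      using cond2_exists[OF hc q(3,4,5)] by blast
    have h': "Arr h" "Dom h = ores Q" "Cod h = A"
      using h by (simp_all add: is_cond2_def hom_def)
    show ?thesis
      unfolding whisker_P whisker_J[unfolded obs_J_def obs.sel] obs_J_def
    proof (rule state_simI[where g = "(h \<otimes> g) \<cdot> sw (ores P) (ores Q)"
                             and g' = "(h \<otimes> ?x) \<cdot> sw U (ores Q)"], unfold obs.sel)
      show "\<not> obs_fails C (Obs U (A \<oplus> X) (ores P \<oplus> ores Q)
              ((idm A \<otimes> omor P \<otimes> idm (ores Q)) \<cdot> omor Q) (oobs P \<otimes> oobs Q))"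
        using obs_fails_whisker[OF ps P Q] not_fails False whisker_P by simp
      show "\<not> obs_fails C (Obs U (A \<oplus> X) (U \<oplus> ores Q)
              ((idm A \<otimes> ?x \<otimes> idm (ores Q)) \<cdot> omor Q) (idm U \<otimes> oobs Q))"
        using obs_fails_whisker[OF ps J Q] obs_J_not_fails[OF x] False whisker_J
        by (simp add: obs_J_def)
      show "is_cond2 C U (A \<oplus> X) (ores P \<oplus> ores Q) ((idm A \<otimes> omor P \<otimes> idm (ores Q)) \<cdot> omor Q)
              ((h \<otimes> g) \<cdot> sw (ores P) (ores Q))"
        by (rule is_cond2_whisker[OF p(3,4,5) q(3,4,5) g h])
      show "is_cond2 C U (A \<oplus> X) (U \<oplus> ores Q) ((idm A \<otimes> ?x \<otimes> idm (ores Q)) \<cdot> omor Q)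
              ((h \<otimes> ?x) \<cdot> sw U (ores Q))"
        by (rule is_cond2_whisker) (use x q is_cond2_state_unit[OF x] h in simp_all)
      have "((h \<otimes> g) \<cdot> sw (ores P) (ores Q)) \<cdot> (oobs P \<otimes> oobs Q) = (h \<cdot> oobs Q) \<otimes> ?x"
        using swap_tens_states[of "oobs P" "oobs Q"] g' h' p q by simp
      also have "\<dots> = (h \<otimes> ?x) \<cdot> (oobs Q \<otimes> idm U)"
        using h' x q by (subst tens_comp) simp_all
      finally show "((h \<otimes> g) \<cdot> sw (ores P) (ores Q)) \<cdot> (oobs P \<otimes> oobs Q) =
                    ((h \<otimes> ?x) \<cdot> sw U (ores Q)) \<cdot> (idm U \<otimes> oobs Q)"
        using h' x q by simp
    qed
  qed
qed

section \<open>Scalars\<close>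

lemma obs_comp_id_left: "obs_hom C X Y F \<Longrightarrow> obs_comp C (obs_id C Y) F = F"
  using obs_homD[of X Y F] by (cases F) (simp add: obs_comp_def obs_id_def)

lemma obs_comp_id_right: "obs_hom C X Y F \<Longrightarrow> obs_comp C F (obs_id C X) = F"
  using obs_homD[of X Y F] by (cases F) (simp add: obs_comp_def obs_id_def)

lemma obs_id_unit_hom: "obs_hom C U U (obs_id C U)"
  by (simp add: obs_id_def obs_hom_def hom_def deterministic_def)

lemma obs_id_unit_not_fails: "\<not> obs_fails C (obs_id C U)"
  by (simp add: obs_id_def obs_fails_def marg2_def abscont_refl)

lemma obs_copy_unit: "obs_copy C U = obs_id C U"
  by (simp add: obs_copy_def obs_J_def obs_id_def)

lemma obs_del_unit: "obs_del C U = obs_id C U"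
  by (simp add: obs_del_def obs_J_def obs_id_def)

lemma obs_equiv_id_unit:
  assumes ps: "precise_supports C" and hc: "has_conditionals C"
    and F: "obs_hom C U U F" and not_fails: "\<not> obs_fails C F"
  shows "obs_equiv C F (obs_id C U)"
proof -
  note f = obs_homD[OF F]
  obtain g where g: "is_cond2 C U U (ores F) (omor F) g"
    using cond2_exists[OF hc f(3,4,5)] by blast
  have "g \<cdot> oobs F = idm U"
    by (rule scalar_eq_idm) (use g f in \<open>simp_all add: is_cond2_def hom_def\<close>)
  thus ?thesis
    using obs_equiv_J_cond2[OF ps hc F not_fails g] by (simp add: obs_J_def obs_id_def)
qed

lemma cond_copyable_id_unit:
  assumes "has_conditionals C"
  shows "cond_copyable C (obs_id C U)"
proof -
  have "obs_tens C (obs_id C U) (obs_id C U) = obs_id C U"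
    by (simp add: obs_tens_def obs_id_def)
  thus ?thesis
    unfolding cond_copyable_def obs_homD(1,2)[OF obs_id_unit_hom] obs_copy_unit
    by (simp add: obs_comp_id_left[OF obs_id_unit_hom] obs_equiv_refl[OF assms obs_id_unit_hom])
qed

lemma cond_copyable_failing_state:
  assumes ps: "precise_supports C" and hc: "has_conditionals C"
    and B: "obs_hom C U X B" and fails: "obs_fails C B"
  shows "cond_copyable C B"
proof -
  have copy: "obs_hom C X (X \<oplus> X) (obs_copy C X)"
    unfolding obs_copy_def by (rule obs_J_hom) simp_all
  have BB: "obs_hom C U (X \<oplus> X) (obs_tens C B B)"
    by (rule obs_tens_states_hom[OF B B])
  show ?thesis
    unfolding cond_copyable_def obs_homD(1,2)[OF B] obs_copy_unit obs_comp_id_right[OF BB]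
    by (rule obs_equiv_failing[OF ps obs_comp_state_hom[OF copy B] BB
          obs_fails_comp[OF ps hc copy B fails]])
      (simp add: obs_fails_tens[OF ps B B] fails)
qed

lemma not_cond_discardable_failing_state:
  assumes ps: "precise_supports C" and hc: "has_conditionals C"
    and B: "obs_hom C U X B" and fails: "obs_fails C B"
  shows "\<not> cond_discardable C B"
proof
  have del: "obs_hom C X U (obs_del C X)"
    unfolding obs_del_def by (rule obs_J_hom) simp_all
  let ?D = "obs_comp C (obs_del C X) B"
  have D: "obs_hom C U U ?D" by (rule obs_comp_state_hom[OF del B])
  assume "cond_discardable C B"
  hence "obs_equiv C ?D (obs_id C U)"
    by (simp add: cond_discardable_def obs_homD(1,2)[OF B] obs_del_unit)
  hence "state_sim C (obs_comp C (obs_tens C (obs_id C U) ?D) (obs_id C U))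
                    (obs_comp C (obs_tens C (obs_id C U) (obs_id C U)) (obs_id C U))"
    unfolding obs_equiv_def using obs_id_unit_hom obs_homD(1)[OF D] by simp
  thus False
    unfolding state_sim_def
    using obs_fails_whisker[OF ps D obs_id_unit_hom] obs_fails_whisker[OF ps obs_id_unit_hom obs_id_unit_hom]
      obs_fails_comp[OF ps hc del B fails] obs_id_unit_not_fails
    by simp
qed

end

theorem proposition5p12:
  fixes C :: "('o, 'm) mcat"
  assumes "markov_category C"
    and "has_conditionals C"
    and "precise_supports C"
    and "\<exists>M mu ob. hom C (c_unit C) M mu \<and> hom C (c_unit C) M ob \<and> deterministic C ob \<and>
                  \<not> abscont C M ob mu"
  shows
    "(\<forall>X P Q. obs_hom C (c_unit C) X P \<and> obs_hom C (c_unit C) X Q \<and>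
               obs_fails C P \<and> obs_fails C Q \<longrightarrow> obs_equiv C P Q)
   \<and> (\<forall>X P g. obs_hom C (c_unit C) X P \<and> \<not> obs_fails C P \<and>
               is_cond2 C (c_unit C) X (ores P) (omor P) g \<longrightarrow>
               obs_equiv C P (obs_J C (c_unit C) X (c_cmp C g (oobs P))))
   \<and> (\<forall>X Y P F. obs_hom C (c_unit C) X P \<and> obs_fails C P \<and> obs_hom C X Y F \<longrightarrow>
               is_failure C Y (obs_comp C F P))
   \<and> (\<forall>X Y P Q. obs_hom C (c_unit C) X P \<and> obs_fails C P \<and> obs_hom C (c_unit C) Y Q \<longrightarrow>
               is_failure C (c_otens C X Y) (obs_tens C P Q) \<and>
               is_failure C (c_otens C Y X) (obs_tens C Q P))
   \<and> (\<exists>B. obs_hom C (c_unit C) (c_unit C) B \<and> obs_fails C B \<and>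
          (\<forall>F. obs_hom C (c_unit C) (c_unit C) F \<longrightarrow>
               obs_equiv C F (obs_id C (c_unit C)) \<or> obs_equiv C F B) \<and>
          cond_copyable C (obs_id C (c_unit C)) \<and> cond_copyable C B \<and>
          \<not> cond_discardable C B)"
proof -
  interpret markov_category C by (rule assms(1))
  note hc = assms(2) and ps = assms(3)
  obtain M mu ob where "hom C U M mu" "hom C U M ob" "deterministic C ob" "\<not> abscont C M ob mu"
    using assms(4) by blast
  hence B: "obs_hom C U U (Obs U U M mu ob)" and B_fails: "obs_fails C (Obs U U M mu ob)"
    by (simp_all add: obs_hom_def obs_fails_def marg2_def hom_def)
  have scalar_cases: "obs_equiv C F (obs_id C U) \<or> obs_equiv C F (Obs U U M mu ob)"
    if "obs_hom C U U F" for F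
    using obs_equiv_id_unit[OF ps hc that] obs_equiv_failing[OF ps that B _ B_fails] by blast
  show ?thesis
  proof (intro conjI allI impI exI)
    show "obs_equiv C P Q" if "obs_hom C U X P \<and> obs_hom C U X Q \<and> obs_fails C P \<and> obs_fails C Q"
      for X P Q using that obs_equiv_failing[OF ps] by blast
    show "obs_equiv C P (obs_J C U X (g \<cdot> oobs P))"
      if "obs_hom C U X P \<and> \<not> obs_fails C P \<and> is_cond2 C U X (ores P) (omor P) g" for X P g
      using that obs_equiv_J_cond2[OF ps hc] by blast
    show "is_failure C Y (obs_comp C F P)"
      if "obs_hom C U X P \<and> obs_fails C P \<and> obs_hom C X Y F" for X Y P F
      using that is_failureI[OF hc] obs_comp_state_hom obs_fails_comp[OF ps hc] by blast
    fix X Y P Q assume "obs_hom C U X P \<and> obs_fails C P \<and> obs_hom C U Y Q"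
    thus "is_failure C (X \<oplus> Y) (obs_tens C P Q)" "is_failure C (Y \<oplus> X) (obs_tens C Q P)"
      using is_failureI[OF hc] obs_tens_states_hom obs_fails_tens[OF ps] by blast+
  qed (use B B_fails scalar_cases cond_copyable_id_unit[OF hc]
         cond_copyable_failing_state[OF ps hc B B_fails]
         not_cond_discardable_failing_state[OF ps hc B B_fails] in blast)+
qed

end
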